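(* Let $ABC$ be a triangle with circumcenter $O$, orthocenter $H$, and orthic triangle $A_HB_HC_H$ (the feet of the altitudes from $A, B, C$). Let $A^*, B^*, C^*$ be the feet of the perpendiculars from $O$ to the lines $AH, BH, CH$ respectively. If line $AO$ meets line $B_HC_H$ at $J$, then the orthocenter $H^*$ of triangle $A^*B^*C^*$ lies on line $A_HJ$. *)

theory Defs
  imports "HOL-Analysis.Analysis"
begin

definition is_foot :: "real^2 \<Rightarrow> real^2 \<Rightarrow> real^2 \<Rightarrow> real^2 \<Rightarrow> bool" where
  "is_foot F X P Q \<longleftrightarrow> collinear {P, Q, F} \<and> (X - F) \<bullet> (Q - P) = 0"

definition is_orthocenter :: "real^2 \<Rightarrow> real^2 \<Rightarrow> real^2 \<Rightarrow> real^2 \<Rightarrow> bool" where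
  "is_orthocenter H A B C \<longleftrightarrow>
     (H - A) \<bullet> (B - C) = 0 \<and> (H - B) \<bullet> (C - A) = 0 \<and> (H - C) \<bullet> (A - B) = 0"

definition is_circumcenter :: "real^2 \<Rightarrow> real^2 \<Rightarrow> real^2 \<Rightarrow> real^2 \<Rightarrow> bool" where
  "is_circumcenter P A B C \<longleftrightarrow> dist P A = dist P B \<and> dist P B = dist P C"

end

theory Submission
  imports Defs
begin

text \<open>
  With circumcentre O one has H = A + B + C - 2 O, and the foot A' is A_H + O - M, where M is
  the midpoint of BC: O M A_H A' is a rectangle, as OM and A_H A' are perpendicular to BC and
  OA' is parallel to it.  The feet A', B', C' see OH at a right angle, so the circumcentre of
  A'B'C' is the midpoint of OH and H' = A' + B' + C' - O - H = A_H + B_H + C_H - 2 H, the Nagel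
  point of the orthic triangle with respect to H.  The line AO is perpendicular to B_H C_H, and
  B_H + C_H - H lies on it because B_H, C_H lie on the circle with diameter AH.  Writing
  A_H - A = t (H - A) and comparing projections onto AO gives J - A = t (B_H + C_H - H - A),
  hence J - A_H = t (H' - A_H).
\<close>

definition cross2 :: "real^2 \<Rightarrow> real^2 \<Rightarrow> real" where
  "cross2 u v = u$1 * v$2 - u$2 * v$1"

lemma inner_real2: "u \<bullet> v = u$1 * v$1 + u$2 * v$2" for u v :: "real^2"
  by (simp add: inner_vec_def sum_2)

lemma cross2_add_right: "cross2 w (u + v) = cross2 w u + cross2 w v"
  and cross2_diff_right: "cross2 w (u - v) = cross2 w u - cross2 w v"
  and cross2_scaleR_left [simp]: "cross2 (c *\<^sub>R u) w = c * cross2 u w"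
  and cross2_scaleR_right [simp]: "cross2 w (c *\<^sub>R u) = c * cross2 w u"
  and cross2_self [simp]: "cross2 u u = 0"
  by (simp_all add: cross2_def algebra_simps)

lemma collinear_0_iff_cross2: "collinear {0, u, v} \<longleftrightarrow> cross2 u v = 0"
proof
  assume "collinear {0, u, v}"
  then have "u = 0 \<or> v = 0 \<or> (\<exists>c. v = c *\<^sub>R u)" by (simp add: collinear_lemma)
  then show "cross2 u v = 0" by (auto simp: cross2_def)
next
  assume uv: "cross2 u v = 0"
  show "collinear {0, u, v}"
  proof (cases "u$1 = 0")
    case True
    then have "v = (v$2 / u$2) *\<^sub>R u \<or> u = 0" using uv
      by (auto simp: cross2_def vec_eq_iff forall_2 field_simps)
    then show ?thesis unfolding collinear_lemma by blast
  next
    case False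
    then have "v = (v$1 / u$1) *\<^sub>R u" using uv
      by (simp add: cross2_def vec_eq_iff forall_2 field_simps)
    then show ?thesis unfolding collinear_lemma by blast
  qed
qed

lemma collinear_iff_cross2: "collinear {P, Q, R} \<longleftrightarrow> cross2 (Q - P) (R - P) = 0"
proof -
  have "collinear {P, Q, R} \<longleftrightarrow> collinear {Q, P, R}" by (simp add: insert_commute)
  also have "\<dots> \<longleftrightarrow> collinear {0, Q - P, R - P}" by (rule collinear_3) simp
  finally show ?thesis by (simp add: collinear_0_iff_cross2)
qed

lemma cross2_eq_0_if_orthogonal:
  assumes "u \<bullet> e = 0" "v \<bullet> e = 0" "e \<noteq> 0"
  shows "cross2 u v = 0"
proof -
  have "u$1 * e$1 + u$2 * e$2 = 0" "v$1 * e$1 + v$2 * e$2 = 0"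
    using assms(1,2) by (simp_all add: inner_real2)
  then have "e$1 * cross2 u v = 0" "e$2 * cross2 u v = 0"
    unfolding cross2_def by algebra+
  moreover have "e$1 \<noteq> 0 \<or> e$2 \<noteq> 0" using assms(3) by (simp add: vec_eq_iff forall_2)
  ultimately show ?thesis by auto
qed

lemma orthogonal_if_cross2_eq_0:
  assumes "cross2 e u = 0" "v \<bullet> e = 0" "e \<noteq> 0"
  shows "v \<bullet> u = 0"
proof -
  have "e$1 * u$2 - e$2 * u$1 = 0" "v$1 * e$1 + v$2 * e$2 = 0"
    using assms(1,2) by (simp_all add: inner_real2 cross2_def)
  then have "e$1 * (v \<bullet> u) = 0" "e$2 * (v \<bullet> u) = 0"
    unfolding inner_real2 by algebra+
  moreover have "e$1 \<noteq> 0 \<or> e$2 \<noteq> 0" using assms(3) by (simp add: vec_eq_iff forall_2)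
  ultimately show ?thesis by auto
qed

lemma eq_0_if_cross2_eq_0_orthogonal:
  assumes "cross2 e u = 0" "u \<bullet> e = 0" "e \<noteq> 0"
  shows "u = 0"
  using orthogonal_if_cross2_eq_0[OF assms] by simp

lemma eq_0_if_orthogonal_independent:
  assumes "v \<bullet> u = 0" "v \<bullet> w = 0" "cross2 u w \<noteq> 0"
  shows "v = 0"
  using cross2_eq_0_if_orthogonal[of u v w] assms by (auto simp: inner_commute)

lemma eq_scaleR_if_cross2_eq_0:
  assumes "cross2 w u = 0" "w \<noteq> 0"
  shows "u = ((u \<bullet> w) / (w \<bullet> w)) *\<^sub>R w"
proof -
  have "w$1 * u$2 - w$2 * u$1 = 0" using assms(1) by (simp add: cross2_def)
  then have "(w \<bullet> w) * u$1 = (u \<bullet> w) * w$1" "(w \<bullet> w) * u$2 = (u \<bullet> w) * w$2"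
    unfolding inner_real2 by algebra+
  moreover have "w \<bullet> w \<noteq> 0" using assms(2) by simp
  ultimately show ?thesis by (simp add: vec_eq_iff forall_2 field_simps)
qed

lemma eq_scaleR_if_parallel:
  assumes "cross2 e p = 0" "cross2 e q = 0" "e \<noteq> 0" "p \<bullet> e = \<tau> * (q \<bullet> e)"
  shows "p = \<tau> *\<^sub>R q"
proof -
  have "cross2 e (p - \<tau> *\<^sub>R q) = 0" using assms(1,2) by (simp add: cross2_diff_right)
  moreover have "(p - \<tau> *\<^sub>R q) \<bullet> e = 0" using assms(4) by (simp add: inner_diff_left)
  ultimately show ?thesis using eq_0_if_cross2_eq_0_orthogonal assms(3) by fastforce
qed

lemma dist_eq_iff_inner:
  fixes Oc B C :: "'a::real_inner"
  shows "dist Oc B = dist Oc C \<longleftrightarrow> (B - Oc) \<bullet> (B - Oc) = (C - Oc) \<bullet> (C - Oc)"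
  by (simp add: dist_commute dist_norm norm_eq_sqrt_inner)

lemma orthogonal_chord_if_equidistant:
  fixes Oc B C :: "'a::real_inner"
  assumes "dist Oc B = dist Oc C"
  shows "(B + C - 2 *\<^sub>R Oc) \<bullet> (B - C) = 0"
proof -
  have "(B + C - 2 *\<^sub>R Oc) \<bullet> (B - C) = ((B - Oc) + (C - Oc)) \<bullet> ((B - Oc) - (C - Oc))"
    by (simp add: scaleR_2 algebra_simps)
  also have "\<dots> = (B - Oc) \<bullet> (B - Oc) - (C - Oc) \<bullet> (C - Oc)"
    using inner_commute[of "B - Oc" "C - Oc"] by (simp only: inner_add_left inner_diff_right)
  finally show ?thesis using assms by (simp add: dist_eq_iff_inner)
qed

lemma dist_midpoint_if_right_angle:
  fixes P Q X :: "'a::real_inner"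
  assumes "(X - P) \<bullet> (X - Q) = 0"
  shows "dist (midpoint P Q) X = dist P Q / 2"
proof -
  have "2 *\<^sub>R (X - midpoint P Q) = (X - P) + (X - Q)" "P - Q = (X - Q) - (X - P)"
    by (simp_all add: midpoint_def scaleR_2 algebra_simps)
  then have "norm (2 *\<^sub>R (X - midpoint P Q)) = norm (P - Q)"
    using assms by (simp add: norm_eq_sqrt_inner inner_add_left inner_diff_left
        inner_add_right inner_diff_right inner_commute)
  then show ?thesis by (simp add: dist_norm norm_minus_commute)
qed

lemma is_foot_commute: "is_foot F X P Q \<longleftrightarrow> is_foot F X Q P"
  by (auto simp: is_foot_def insert_commute inner_diff_right)

lemma is_foot_unique:
  assumes "is_foot F X P Q" "is_foot F' X P Q" "P \<noteq> Q"
  shows "F = F'"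
proof -
  have "cross2 (Q - P) (F - F') = cross2 (Q - P) (F - P) - cross2 (Q - P) (F' - P)"
    by (simp add: cross2_def algebra_simps)
  then have "cross2 (Q - P) (F - F') = 0"
    using assms(1,2) by (simp add: is_foot_def collinear_iff_cross2)
  moreover have "(F - F') \<bullet> (Q - P) = 0"
    using assms(1,2) by (simp add: is_foot_def inner_diff_left)
  ultimately show ?thesis
    using eq_0_if_cross2_eq_0_orthogonal assms(3) by fastforce
qed

lemma is_orthocenter_unique:
  assumes "\<not> collinear {A, B, C}" "is_orthocenter H A B C" "is_orthocenter H' A B C"
  shows "H = H'"
proof -
  have "(H - H') \<bullet> (B - C) = 0" "(H - H') \<bullet> (C - A) = 0"
    using assms(2,3) by (simp_all add: is_orthocenter_def inner_diff_left)
  moreover have "cross2 (B - C) (C - A) = cross2 (B - A) (C - A)"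
    by (simp add: cross2_def algebra_simps)
  then have "cross2 (B - C) (C - A) \<noteq> 0"
    using assms(1) by (simp add: collinear_iff_cross2)
  ultimately show ?thesis using eq_0_if_orthogonal_independent by fastforce
qed

lemma is_orthocenter_sum_minus_circumcenter:
  assumes "is_circumcenter Oc A B C"
  shows "is_orthocenter (A + B + C - 2 *\<^sub>R Oc) A B C"
proof -
  have "dist Oc B = dist Oc C" "dist Oc C = dist Oc A" "dist Oc A = dist Oc B"
    using assms by (simp_all add: is_circumcenter_def)
  then have "(B + C - 2 *\<^sub>R Oc) \<bullet> (B - C) = 0" "(C + A - 2 *\<^sub>R Oc) \<bullet> (C - A) = 0"
    "(A + B - 2 *\<^sub>R Oc) \<bullet> (A - B) = 0"
    by (simp_all add: orthogonal_chord_if_equidistant)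
  then show ?thesis by (simp add: is_orthocenter_def algebra_simps)
qed

lemma orthocenter_eq_sum_minus_circumcenter:
  assumes "\<not> collinear {A, B, C}" "is_circumcenter Oc A B C" "is_orthocenter H A B C"
  shows "H = A + B + C - 2 *\<^sub>R Oc"
  using is_orthocenter_unique is_orthocenter_sum_minus_circumcenter assms by blast

lemma is_foot_along_perpendicular:
  assumes "is_foot F X P Q" "(Y - X) \<bullet> (Q - P) = 0"
  shows "is_foot F Y P Q"
proof -
  have "(Y - F) \<bullet> (Q - P) = (Y - X) \<bullet> (Q - P) + (X - F) \<bullet> (Q - P)"
    by (simp add: inner_diff_left)
  then have "(Y - F) \<bullet> (Q - P) = 0"
    using assms by (simp add: is_foot_def)
  then show ?thesis using assms(1) by (simp add: is_foot_def)
qed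

lemma is_foot_right_angle:
  assumes "is_foot F X P Q" "P \<noteq> Q"
  shows "(F - X) \<bullet> (F - Q) = 0"
proof -
  have "cross2 (Q - P) (F - Q) = cross2 (Q - P) (F - P)"
    by (simp add: cross2_def algebra_simps)
  then have "cross2 (Q - P) (F - Q) = 0"
    using assms(1) by (simp add: is_foot_def collinear_iff_cross2)
  moreover have "(X - F) \<bullet> (Q - P) = 0" using assms(1) by (simp add: is_foot_def)
  ultimately have "(X - F) \<bullet> (F - Q) = 0"
    using orthogonal_if_cross2_eq_0 assms(2) by fastforce
  then show ?thesis by (simp add: inner_diff_left inner_diff_right)
qed

lemma foot_of_circumcenter_on_altitude:
  assumes circ: "dist Oc B = dist Oc C" and "B \<noteq> C" and foot: "is_foot F A B C"
    and alt: "(H - A) \<bullet> (B - C) = 0" and "A \<noteq> H" and foot': "is_foot A' Oc A H"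
  shows "A' = F + Oc - midpoint B C"
proof (rule is_foot_unique[OF foot' _ \<open>A \<noteq> H\<close>])
  let ?X = "F + Oc - midpoint B C"
  have "C - B \<noteq> 0" using \<open>B \<noteq> C\<close> by simp
  have "(F - A) \<bullet> (C - B) = 0" using foot by (simp add: is_foot_def inner_diff_left)
  moreover have "(Oc - midpoint B C) \<bullet> (C - B) = 0"
  proof -
    have "Oc - midpoint B C = (- 1/2) *\<^sub>R (B + C - 2 *\<^sub>R Oc)"
      by (simp add: midpoint_def algebra_simps)
    then show ?thesis
      using orthogonal_chord_if_equidistant[OF circ] by (simp add: inner_diff_right)
  qed
  ultimately have "(?X - A) \<bullet> (C - B) = 0" by (simp add: algebra_simps inner_add_left)
  moreover have "(H - A) \<bullet> (C - B) = 0" using alt by (simp add: inner_diff_right)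
  ultimately have "cross2 (H - A) (?X - A) = 0"
    using cross2_eq_0_if_orthogonal \<open>C - B \<noteq> 0\<close> by blast
  moreover have "(Oc - ?X) \<bullet> (H - A) = 0"
  proof -
    have "cross2 (C - B) (F - B) = 0"
      using foot by (simp add: is_foot_def collinear_iff_cross2)
    moreover have "midpoint B C - F = (1/2) *\<^sub>R (C - B) - (F - B)"
      by (simp add: vec_eq_iff forall_2 midpoint_def field_simps)
    then have "cross2 (C - B) (midpoint B C - F) = - cross2 (C - B) (F - B)"
      by (simp add: cross2_diff_right cross2_add_right)
    ultimately have "cross2 (C - B) (midpoint B C - F) = 0" by simp
    then have "(H - A) \<bullet> (midpoint B C - F) = 0"
      using orthogonal_if_cross2_eq_0 \<open>(H - A) \<bullet> (C - B) = 0\<close> \<open>C - B \<noteq> 0\<close> by blast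
    then show ?thesis by (simp add: inner_commute)
  qed
  ultimately show "is_foot ?X Oc A H" by (simp add: is_foot_def collinear_iff_cross2)
qed

lemma foot_inner_circumradius:
  assumes circ: "dist Oc A = dist Oc P" and "A \<noteq> P" and foot: "is_foot F X A P"
  shows "2 * ((F - A) \<bullet> (Oc - A)) = (X - A) \<bullet> (P - A)"
proof -
  have "cross2 (P - A) (F - A) = 0" using foot by (simp add: is_foot_def collinear_iff_cross2)
  moreover have "(P + A - 2 *\<^sub>R Oc) \<bullet> (P - A) = 0"
    using orthogonal_chord_if_equidistant circ by (metis dist_commute)
  ultimately have "(P + A - 2 *\<^sub>R Oc) \<bullet> (F - A) = 0"
    using orthogonal_if_cross2_eq_0 \<open>A \<noteq> P\<close> by force
  moreover have "P + A - 2 *\<^sub>R Oc = (P - A) - 2 *\<^sub>R (Oc - A)"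
    by (simp add: vec_eq_iff forall_2)
  then have "(P + A - 2 *\<^sub>R Oc) \<bullet> (F - A) = (P - A) \<bullet> (F - A) - 2 * ((Oc - A) \<bullet> (F - A))"
    by (simp only: inner_diff_left inner_scaleR_left)
  moreover have "(X - F) \<bullet> (P - A) = 0" using foot by (simp add: is_foot_def)
  then have "(X - A) \<bullet> (P - A) = (F - A) \<bullet> (P - A)"
    by (simp add: inner_diff_left)
  ultimately show ?thesis by (simp add: inner_commute)
qed

lemma altitude_foot_inner:
  assumes foot: "is_foot F A B C" and "B \<noteq> C"
    and alt: "(H - A) \<bullet> (B - C) = 0" "(H - C) \<bullet> (A - B) = 0"
  shows "(F - A) \<bullet> (H - A) = (B - A) \<bullet> (C - A)"
proof -
  have "cross2 (C - B) (F - B) = 0" using foot by (simp add: is_foot_def collinear_iff_cross2)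
  moreover have "(H - A) \<bullet> (C - B) = 0" using alt(1) by (simp add: inner_diff_right)
  ultimately have "(H - A) \<bullet> (F - B) = 0"
    using orthogonal_if_cross2_eq_0 \<open>B \<noteq> C\<close> by force
  moreover have "(B - A) \<bullet> (H - C) = 0" using alt(2) by (simp add: inner_diff_right inner_commute)
  moreover have "(F - A) \<bullet> (H - A) = (H - A) \<bullet> (F - B) + (B - A) \<bullet> (H - A)"
    by (simp add: inner_diff_left inner_diff_right inner_commute)
  moreover have "(B - A) \<bullet> (H - A) = (B - A) \<bullet> (H - C) + (B - A) \<bullet> (C - A)"
    by (simp add: inner_diff_right)
  ultimately show ?thesis by simp
qed

lemma altitude_foot_eq:
  assumes "is_foot F A B C" "B \<noteq> C" "A \<noteq> H"
    and "(H - A) \<bullet> (B - C) = 0" "(H - C) \<bullet> (A - B) = 0"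
  shows "F - A = ((B - A) \<bullet> (C - A) / ((H - A) \<bullet> (H - A))) *\<^sub>R (H - A)"
proof -
  have "(F - A) \<bullet> (B - C) = 0"
    using assms(1) by (simp add: is_foot_def inner_diff_left inner_diff_right)
  then have "cross2 (H - A) (F - A) = 0"
    using cross2_eq_0_if_orthogonal assms(2,4) by force
  then show ?thesis
    using eq_scaleR_if_cross2_eq_0 altitude_foot_inner assms by fastforce
qed

lemma inner_orthocenter_vertex:
  assumes "is_circumcenter Oc A B C" "H = A + B + C - 2 *\<^sub>R Oc"
  shows "(H - A) \<bullet> (H - A) = 2 * ((B - A) \<bullet> (C - A) - (H - A) \<bullet> (Oc - A))"
proof -
  have "(A - Oc) \<bullet> (A - Oc) = (B - Oc) \<bullet> (B - Oc)" "(A - Oc) \<bullet> (A - Oc) = (C - Oc) \<bullet> (C - Oc)"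
    using assms(1) by (simp_all add: is_circumcenter_def dist_eq_iff_inner)
  then show ?thesis
    unfolding assms(2) inner_real2 by simp algebra
qed

lemma orthic_line_inner_circumradius:
  assumes circ: "is_circumcenter Oc A B C" and "A \<noteq> B" "C \<noteq> A"
    and feetB: "is_foot B\<^sub>H B C A" and feetC: "is_foot C\<^sub>H C A B"
    and "B\<^sub>H \<noteq> C\<^sub>H" and X: "collinear {B\<^sub>H, C\<^sub>H, X}"
  shows "2 * ((X - A) \<bullet> (Oc - A)) = (B - A) \<bullet> (C - A)"
proof -
  have "dist Oc A = dist Oc B" "dist Oc A = dist Oc C"
    using circ by (simp_all add: is_circumcenter_def)
  then have B: "2 * ((B\<^sub>H - A) \<bullet> (Oc - A)) = (B - A) \<bullet> (C - A)"
    and C: "2 * ((C\<^sub>H - A) \<bullet> (Oc - A)) = (B - A) \<bullet> (C - A)"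
    using foot_inner_circumradius feetC feetB[unfolded is_foot_commute[of _ _ C]]
      \<open>A \<noteq> B\<close> \<open>C \<noteq> A\<close> by (metis inner_commute)+
  have "(Oc - A) \<bullet> (C\<^sub>H - B\<^sub>H) = 0"
    using B C by (simp add: inner_diff_left inner_diff_right inner_commute)
  moreover have "cross2 (C\<^sub>H - B\<^sub>H) (X - B\<^sub>H) = 0"
    using X by (simp add: collinear_iff_cross2)
  ultimately have "(Oc - A) \<bullet> (X - B\<^sub>H) = 0"
    using orthogonal_if_cross2_eq_0 \<open>B\<^sub>H \<noteq> C\<^sub>H\<close> by force
  then show ?thesis
    using B by (simp add: inner_diff_left inner_diff_right inner_commute)
qed

lemma feet_sum_on_circumradius:
  assumes circ: "is_circumcenter Oc A B C" and "A \<noteq> B" "C \<noteq> A"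
    and orth: "is_orthocenter H A B C"
    and feetB: "is_foot B\<^sub>H B C A" and feetC: "is_foot C\<^sub>H C A B" and "B\<^sub>H \<noteq> C\<^sub>H"
  shows "collinear {A, Oc, B\<^sub>H + C\<^sub>H - H}"
proof -
  have "is_foot B\<^sub>H H C A"
    using is_foot_along_perpendicular[OF feetB] orth
    by (simp add: is_orthocenter_def inner_diff_right)
  then have "(B\<^sub>H - H) \<bullet> (B\<^sub>H - A) = 0" using is_foot_right_angle \<open>C \<noteq> A\<close> by blast
  have "is_foot C\<^sub>H H B A"
    using is_foot_along_perpendicular[OF feetC] orth
    by (simp add: is_orthocenter_def is_foot_commute[of C\<^sub>H _ A B] inner_diff_right inner_commute)
  then have "(C\<^sub>H - H) \<bullet> (C\<^sub>H - A) = 0" using is_foot_right_angle \<open>A \<noteq> B\<close> by blast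
  have "dist (midpoint H A) B\<^sub>H = dist (midpoint H A) C\<^sub>H"
    using dist_midpoint_if_right_angle \<open>(B\<^sub>H - H) \<bullet> (B\<^sub>H - A) = 0\<close>
      \<open>(C\<^sub>H - H) \<bullet> (C\<^sub>H - A) = 0\<close> by metis
  then have "(B\<^sub>H + C\<^sub>H - 2 *\<^sub>R midpoint H A) \<bullet> (B\<^sub>H - C\<^sub>H) = 0"
    by (rule orthogonal_chord_if_equidistant)
  then have "(B\<^sub>H + C\<^sub>H - H - A) \<bullet> (B\<^sub>H - C\<^sub>H) = 0"
    by (simp add: midpoint_def diff_diff_eq)
  moreover have "(Oc - A) \<bullet> (B\<^sub>H - C\<^sub>H) = 0"
  proof -
    have "collinear {B\<^sub>H, C\<^sub>H, B\<^sub>H}" "collinear {B\<^sub>H, C\<^sub>H, C\<^sub>H}"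
      by (simp_all add: collinear_2 insert_commute)
    then have "2 * ((B\<^sub>H - A) \<bullet> (Oc - A)) = 2 * ((C\<^sub>H - A) \<bullet> (Oc - A))"
      using orthic_line_inner_circumradius[OF circ \<open>A \<noteq> B\<close> \<open>C \<noteq> A\<close> feetB feetC \<open>B\<^sub>H \<noteq> C\<^sub>H\<close>]
      by metis
    then show ?thesis by (simp add: inner_diff_left inner_diff_right inner_commute)
  qed
  ultimately have "cross2 (Oc - A) (B\<^sub>H + C\<^sub>H - H - A) = 0"
    using cross2_eq_0_if_orthogonal \<open>B\<^sub>H \<noteq> C\<^sub>H\<close> by force
  then show ?thesis by (simp add: collinear_iff_cross2)
qed

lemma orthic_nagel_collinear:
  assumes tri: "\<not> collinear {A, B, C}" and circ: "is_circumcenter Oc A B C"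
    and orth: "is_orthocenter H A B C"
    and feetA: "is_foot A\<^sub>H A B C" and feetB: "is_foot B\<^sub>H B C A" and feetC: "is_foot C\<^sub>H C A B"
    and "A \<noteq> H" and "B\<^sub>H \<noteq> C\<^sub>H"
    and J: "collinear {A, Oc, J}" "collinear {B\<^sub>H, C\<^sub>H, J}"
  shows "collinear {A\<^sub>H, J, A\<^sub>H + B\<^sub>H + C\<^sub>H - 2 *\<^sub>R H}"
proof -
  define a w bc \<tau> where "a = Oc - A" and "w = H - A" and "bc = (B - A) \<bullet> (C - A)"
    and "\<tau> = bc / (w \<bullet> w)"
  have "A \<noteq> B" "B \<noteq> C" "C \<noteq> A" using tri by (auto simp: collinear_2 insert_commute)
  have "a \<noteq> 0" using circ \<open>A \<noteq> B\<close> by (auto simp: a_def is_circumcenter_def)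
  have "w \<bullet> w \<noteq> 0" using \<open>A \<noteq> H\<close> by (simp add: w_def)
  have height: "2 * ((X - A) \<bullet> a) = bc" if "collinear {B\<^sub>H, C\<^sub>H, X}" for X
    using orthic_line_inner_circumradius[OF circ \<open>A \<noteq> B\<close> \<open>C \<noteq> A\<close> feetB feetC \<open>B\<^sub>H \<noteq> C\<^sub>H\<close> that]
    by (simp add: a_def bc_def)
  have "collinear {B\<^sub>H, C\<^sub>H, B\<^sub>H}" "collinear {B\<^sub>H, C\<^sub>H, C\<^sub>H}"
    by (simp_all add: collinear_2 insert_commute)
  from height[OF this(1)] height[OF this(2)]
  have "(B\<^sub>H + C\<^sub>H - H - A) \<bullet> a = bc - w \<bullet> a"
    by (simp add: w_def inner_diff_left inner_add_left)
  moreover have "bc - w \<bullet> a = (w \<bullet> w) / 2"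
    using inner_orthocenter_vertex[OF circ] orthocenter_eq_sum_minus_circumcenter[OF tri circ orth]
    by (simp add: a_def w_def bc_def)
  ultimately have "(B\<^sub>H + C\<^sub>H - H - A) \<bullet> a = (w \<bullet> w) / 2" by simp
  then have "\<tau> * ((B\<^sub>H + C\<^sub>H - H - A) \<bullet> a) = bc / (w \<bullet> w) * ((w \<bullet> w) / 2)"
    by (simp only: \<tau>_def)
  also have "\<dots> = bc / 2" using \<open>w \<bullet> w \<noteq> 0\<close> by simp
  finally have "(J - A) \<bullet> a = \<tau> * ((B\<^sub>H + C\<^sub>H - H - A) \<bullet> a)"
    using height[OF J(2)] by simp
  moreover have "cross2 a (J - A) = 0" "cross2 a (B\<^sub>H + C\<^sub>H - H - A) = 0"
    using J(1) feet_sum_on_circumradius[OF circ \<open>A \<noteq> B\<close> \<open>C \<noteq> A\<close> orth feetB feetC \<open>B\<^sub>H \<noteq> C\<^sub>H\<close>]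
    by (simp_all add: a_def collinear_iff_cross2)
  ultimately have JA: "J - A = \<tau> *\<^sub>R (B\<^sub>H + C\<^sub>H - H - A)"
    using eq_scaleR_if_parallel \<open>a \<noteq> 0\<close> by blast
  have AH: "A\<^sub>H - A = \<tau> *\<^sub>R w"
    using altitude_foot_eq[OF feetA \<open>B \<noteq> C\<close> \<open>A \<noteq> H\<close>] orth
    by (simp add: is_orthocenter_def \<tau>_def bc_def w_def)
  have "J - A\<^sub>H = (J - A) - (A\<^sub>H - A)" by simp
  also have "\<dots> = \<tau> *\<^sub>R (B\<^sub>H + C\<^sub>H - H - A) - \<tau> *\<^sub>R w" by (simp only: JA AH)
  also have "\<dots> = \<tau> *\<^sub>R (A\<^sub>H + B\<^sub>H + C\<^sub>H - 2 *\<^sub>R H - A\<^sub>H)"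
    by (simp add: w_def vec_eq_iff forall_2 algebra_simps)
  finally show ?thesis
    by (simp add: collinear_iff_cross2)
qed

theorem lemma4p1:
  fixes A B C Oc H A\<^sub>H B\<^sub>H C\<^sub>H A' B' C' J H' :: "real^2"
  assumes tri: "\<not> collinear {A, B, C}"
    and circ: "is_circumcenter Oc A B C"
    and orth: "is_orthocenter H A B C"
    and feetA: "is_foot A\<^sub>H A B C"
    and feetB: "is_foot B\<^sub>H B C A"
    and feetC: "is_foot C\<^sub>H C A B"
    and lines: "A \<noteq> H" "B \<noteq> H" "C \<noteq> H"
    and starA: "is_foot A' Oc A H"
    and starB: "is_foot B' Oc B H"
    and starC: "is_foot C' Oc C H"
    and BCH: "B\<^sub>H \<noteq> C\<^sub>H"
    and J: "collinear {A, Oc, J}" "collinear {B\<^sub>H, C\<^sub>H, J}"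
    and tri': "\<not> collinear {A', B', C'}"
    and orth': "is_orthocenter H' A' B' C'"
  shows "collinear {A\<^sub>H, J, H'}"
proof -
  have "A \<noteq> B" "B \<noteq> C" "C \<noteq> A" using tri by (auto simp: collinear_2 insert_commute)
  have "dist Oc B = dist Oc C" "dist Oc C = dist Oc A" "dist Oc A = dist Oc B"
    using circ by (simp_all add: is_circumcenter_def)
  moreover have "(H - A) \<bullet> (B - C) = 0" "(H - B) \<bullet> (C - A) = 0" "(H - C) \<bullet> (A - B) = 0"
    using orth by (simp_all add: is_orthocenter_def)
  ultimately have A': "A' = A\<^sub>H + Oc - midpoint B C"
    and B': "B' = B\<^sub>H + Oc - midpoint C A"
    and C': "C' = C\<^sub>H + Oc - midpoint A B"
    using foot_of_circumcenter_on_altitude feetA feetB feetC starA starB starC lines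
      \<open>A \<noteq> B\<close> \<open>B \<noteq> C\<close> \<open>C \<noteq> A\<close> by metis+
  have "dist (midpoint Oc H) A' = dist Oc H / 2" "dist (midpoint Oc H) B' = dist Oc H / 2"
    "dist (midpoint Oc H) C' = dist Oc H / 2"
    using is_foot_right_angle dist_midpoint_if_right_angle starA starB starC lines by blast+
  then have "is_circumcenter (midpoint Oc H) A' B' C'"
    by (simp add: is_circumcenter_def)
  then have "H' = A' + B' + C' - 2 *\<^sub>R midpoint Oc H"
    using orthocenter_eq_sum_minus_circumcenter tri' orth' by blast
  also have "\<dots> = A\<^sub>H + B\<^sub>H + C\<^sub>H - 2 *\<^sub>R H"
    using orthocenter_eq_sum_minus_circumcenter[OF tri circ orth]
    by (simp add: A' B' C' midpoint_def vec_eq_iff forall_2 field_simps)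
  finally show ?thesis
    using orthic_nagel_collinear[OF tri circ orth feetA feetB feetC lines(1) BCH J] by simp
qed

end
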